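(* Let $L\ge1$, let $\gamma,\theta,\zeta,\mu_1,\dots,\mu_L$ be generic complex parameters, and consider the functions $M_\nu:\mathbb{C}^{L+1}\to\mathbb{C}$, $0\le\nu\le L$, $(\lambda_0,\boldsymbol\lambda)\mapsto M_\nu(\lambda_0;\boldsymbol\lambda)$ with $\boldsymbol\lambda=(\lambda_1,\dots,\lambda_L)$, defined in the context. Then: (1) $M_0(\lambda_0;\boldsymbol\lambda)$ is symmetric in $\lambda_1,\dots,\lambda_L$ and invariant under $\lambda_j\mapsto-\lambda_j-\gamma$ for each $1\le j\le L$; (2) for each $1\le i\le L$, $M_i(\lambda_0;\boldsymbol\lambda)$ is symmetric in the variables $\lambda_j$, $j\in\{1,\dots,L\}\setminus\{i\}$, and invariant under $\lambda_j\mapsto-\lambda_j-\gamma$ for each $j\in\{1,\dots,L\}\setminus\{i\}$; (3) for $1\le i,j\le L$, $M_i(\lambda_0;\boldsymbol\lambda)|_{\lambda_i\leftrightarrow\lambda_j}=M_j(\lambda_0;\boldsymbol\lambda)$, and \[ M_i(\lambda_0;\boldsymbol\lambda)\big|_{\lambda_i\mapsto-\lambda_i-\gamma}=-\frac{[2\lambda_i+2\gamma,\,\theta+\zeta+\lambda_i]}{[2\lambda_i,\,\theta+\zeta-\lambda_i-\gamma]}\,M_i(\lambda_0;\boldsymbol\lambda). \]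
   Context: Fix $\tau\in\mathbb{C}$ with $\operatorname{Im}\tau>0$, let $f(\lambda)=\sum_{n\ge0}(-1)^n e^{\mathrm{i}n(n+1)\pi\tau}\sinh((2n+1)\lambda)$, and write $[x]:=f(x)$, $[x_1,\dots,x_k]:=f(x_1)\cdots f(x_k)$. Define $\Lambda_{\mathcal A}(\lambda)=[\zeta+\lambda]\frac{[\theta+\zeta-\lambda]}{[\theta+\zeta+\lambda]}\prod_{j=1}^L[\lambda-\mu_j+\gamma,\lambda+\mu_j+\gamma]$, $\Lambda_{\tilde{\mathcal D}}(\lambda)=[\zeta-\lambda-\gamma]\frac{[2\lambda,\theta+\zeta+\lambda+\gamma,\theta-L\gamma]}{[2\lambda+\gamma,\theta+\zeta+\lambda,\theta-(L-1)\gamma]}\prod_{j=1}^L[\lambda-\mu_j,\lambda+\mu_j]$, $\bar\Lambda_{\mathcal A}(\lambda)=[\zeta-\lambda]\frac{[\gamma,\theta+(L-1)\gamma-2\lambda]}{[2\lambda+\gamma,\theta+(L-1)\gamma]}\prod_{j=1}^L[\lambda-\mu_j+\gamma,\lambda+\mu_j+\gamma]+[\zeta+\lambda+\gamma]\frac{[2\lambda,\theta+\zeta-\lambda-\gamma,\theta+L\gamma]}{[2\lambda+\gamma,\theta+\zeta+\lambda,\theta+(L-1)\gamma]}\prod_{j=1}^L[\lambda-\mu_j,\lambda+\mu_j]$. Then $M_0(\lambda_0;\boldsymbol\lambda)=\bar\Lambda_{\mathcal A}(\lambda_0)-\Lambda_{\mathcal A}(\lambda_0)\prod_{j=1}^L\frac{[\lambda_j-\lambda_0+\gamma,\lambda_j+\lambda_0]}{[\lambda_j-\lambda_0,\lambda_j+\lambda_0+\gamma]}$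 and, for $1\le i\le L$, $M_i(\lambda_0;\boldsymbol\lambda)=\frac{[2\lambda_i,\gamma,\theta+(L-1)\gamma+\lambda_i-\lambda_0]}{[2\lambda_i+\gamma,\lambda_i-\lambda_0,\theta+(L-1)\gamma]}\Lambda_{\mathcal A}(\lambda_i)\prod_{j\ne i}\frac{[\lambda_j-\lambda_i+\gamma,\lambda_j+\lambda_i]}{[\lambda_j-\lambda_i,\lambda_j+\lambda_i+\gamma]}+\frac{[\gamma,\theta+(L-2)\gamma-\lambda_i-\lambda_0,\theta-(L-1)\gamma]}{[\lambda_i+\lambda_0+\gamma,\theta+(L-1)\gamma,\theta-L\gamma]}\Lambda_{\tilde{\mathcal D}}(\lambda_i)\prod_{j\ne i}\frac{[\lambda_i-\lambda_j+\gamma,\lambda_i+\lambda_j+2\gamma]}{[\lambda_i-\lambda_j,\lambda_i+\lambda_j+\gamma]}$, products over $j\in\{1,\dots,L\}$. *)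

theory Defs
  imports "HOL-Analysis.Analysis" "HOL-Combinatorics.Permutations"
begin

text \<open>The odd theta-type function [x] = f(x) with nome parameter tau (Im tau > 0).\<close>
definition thf :: "complex \<Rightarrow> complex \<Rightarrow> complex" where
  "thf tau x = (\<Sum>n. (-1)^n * exp (\<i> * of_nat (n * (n + 1)) * of_real pi * tau)
                      * sinh (of_nat (2 * n + 1) * x))"

definition LamA :: "complex \<Rightarrow> complex \<Rightarrow> complex \<Rightarrow> complex \<Rightarrow> nat \<Rightarrow> (nat \<Rightarrow> complex)
    \<Rightarrow> complex \<Rightarrow> complex" where
  "LamA tau g th z L mu x =
     thf tau (z + x) * thf tau (th + z - x) / thf tau (th + z + x)
     * (\<Prod>j\<in>{1..L}. thf tau (x - mu j + g) * thf tau (x + mu j + g))"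

definition LamD :: "complex \<Rightarrow> complex \<Rightarrow> complex \<Rightarrow> complex \<Rightarrow> nat \<Rightarrow> (nat \<Rightarrow> complex)
    \<Rightarrow> complex \<Rightarrow> complex" where
  "LamD tau g th z L mu x =
     thf tau (z - x - g)
     * (thf tau (2 * x) * thf tau (th + z + x + g) * thf tau (th - of_nat L * g))
     / (thf tau (2 * x + g) * thf tau (th + z + x) * thf tau (th - (of_nat L - 1) * g))
     * (\<Prod>j\<in>{1..L}. thf tau (x - mu j) * thf tau (x + mu j))"

definition LamAbar :: "complex \<Rightarrow> complex \<Rightarrow> complex \<Rightarrow> complex \<Rightarrow> nat \<Rightarrow> (nat \<Rightarrow> complex)
    \<Rightarrow> complex \<Rightarrow> complex" where
  "LamAbar tau g th z L mu x =
     thf tau (z - x)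
     * (thf tau g * thf tau (th + (of_nat L - 1) * g - 2 * x))
     / (thf tau (2 * x + g) * thf tau (th + (of_nat L - 1) * g))
     * (\<Prod>j\<in>{1..L}. thf tau (x - mu j + g) * thf tau (x + mu j + g))
   + thf tau (z + x + g)
     * (thf tau (2 * x) * thf tau (th + z - x - g) * thf tau (th + of_nat L * g))
     / (thf tau (2 * x + g) * thf tau (th + z + x) * thf tau (th + (of_nat L - 1) * g))
     * (\<Prod>j\<in>{1..L}. thf tau (x - mu j) * thf tau (x + mu j))"

definition M0 :: "complex \<Rightarrow> complex \<Rightarrow> complex \<Rightarrow> complex \<Rightarrow> nat \<Rightarrow> (nat \<Rightarrow> complex)
    \<Rightarrow> complex \<Rightarrow> (nat \<Rightarrow> complex) \<Rightarrow> complex" where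
  "M0 tau g th z L mu l0 lam =
     LamAbar tau g th z L mu l0
     - LamA tau g th z L mu l0
       * (\<Prod>j\<in>{1..L}. (thf tau (lam j - l0 + g) * thf tau (lam j + l0))
                        / (thf tau (lam j - l0) * thf tau (lam j + l0 + g)))"

definition Mi :: "complex \<Rightarrow> complex \<Rightarrow> complex \<Rightarrow> complex \<Rightarrow> nat \<Rightarrow> (nat \<Rightarrow> complex)
    \<Rightarrow> nat \<Rightarrow> complex \<Rightarrow> (nat \<Rightarrow> complex) \<Rightarrow> complex" where
  "Mi tau g th z L mu i l0 lam =
     (thf tau (2 * lam i) * thf tau g * thf tau (th + (of_nat L - 1) * g + lam i - l0))
     / (thf tau (2 * lam i + g) * thf tau (lam i - l0) * thf tau (th + (of_nat L - 1) * g))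
     * LamA tau g th z L mu (lam i)
     * (\<Prod>j\<in>{1..L} - {i}. (thf tau (lam j - lam i + g) * thf tau (lam j + lam i))
                             / (thf tau (lam j - lam i) * thf tau (lam j + lam i + g)))
   + (thf tau g * thf tau (th + (of_nat L - 2) * g - lam i - l0) * thf tau (th - (of_nat L - 1) * g))
     / (thf tau (lam i + l0 + g) * thf tau (th + (of_nat L - 1) * g) * thf tau (th - of_nat L * g))
     * LamD tau g th z L mu (lam i)
     * (\<Prod>j\<in>{1..L} - {i}. (thf tau (lam i - lam j + g) * thf tau (lam i + lam j + 2 * g))
                             / (thf tau (lam i - lam j) * thf tau (lam i + lam j + g)))"

text \<open>Genericity: every denominator occurring in M_0 at the given point is nonzero
  (so that M_0 is regular there and the identities are meaningful pointwise).\<close>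
definition M0_regular :: "complex \<Rightarrow> complex \<Rightarrow> complex \<Rightarrow> complex \<Rightarrow> nat
    \<Rightarrow> complex \<Rightarrow> (nat \<Rightarrow> complex) \<Rightarrow> bool" where
  "M0_regular tau g th z L l0 lam \<longleftrightarrow>
     thf tau (th + z + l0) \<noteq> 0 \<and> thf tau (2 * l0 + g) \<noteq> 0
     \<and> thf tau (th + (of_nat L - 1) * g) \<noteq> 0
     \<and> (\<forall>j\<in>{1..L}. thf tau (lam j - l0) \<noteq> 0 \<and> thf tau (lam j + l0 + g) \<noteq> 0)"

definition Mi_regular :: "complex \<Rightarrow> complex \<Rightarrow> complex \<Rightarrow> complex \<Rightarrow> nat
    \<Rightarrow> nat \<Rightarrow> complex \<Rightarrow> (nat \<Rightarrow> complex) \<Rightarrow> bool" where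
  "Mi_regular tau g th z L i l0 lam \<longleftrightarrow>
     thf tau (2 * lam i + g) \<noteq> 0 \<and> thf tau (lam i - l0) \<noteq> 0
     \<and> thf tau (th + (of_nat L - 1) * g) \<noteq> 0 \<and> thf tau (th + z + lam i) \<noteq> 0
     \<and> thf tau (lam i + l0 + g) \<noteq> 0 \<and> thf tau (th - of_nat L * g) \<noteq> 0
     \<and> thf tau (th - (of_nat L - 1) * g) \<noteq> 0
     \<and> (\<forall>j\<in>{1..L} - {i}. thf tau (lam j - lam i) \<noteq> 0 \<and> thf tau (lam j + lam i + g) \<noteq> 0
                          \<and> thf tau (lam i - lam j) \<noteq> 0 \<and> thf tau (lam i + lam j + g) \<noteq> 0)"

end

theory Submission
  imports Defs
begin

text \<open>Everything rests on \<open>[\<cdot>]\<close> being odd, which holds termwise because \<open>sinh\<close> is odd, once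
  the defining series converges (for \<open>Im \<tau> > 0\<close> its coefficients decay like \<open>exp(-c n\<^sup>2)\<close>).
  By oddness, \<open>\<lambda> \<mapsto> -\<lambda> - \<gamma>\<close> leaves each factor of the products over \<open>j\<close> invariant, while
  reflecting \<open>\<lambda>\<^sub>i\<close> itself interchanges the two families of factors in \<open>M\<^sub>i\<close> together with
  \<open>\<Lambda>\<^sub>A\<close> and \<open>\<Lambda>\<^sub>D\<close>; the prefactors left over give the stated ratio. Symmetry is reindexing.\<close>

lemma norm_sinh_le_exp_norm: "norm (sinh x) \<le> exp (norm (x :: 'a :: {banach, real_normed_algebra_1}))"
proof -
  have "norm (sinh x) \<le> (norm (exp x) + norm (exp (- x))) / 2"
    unfolding sinh_def using norm_triangle_ineq4[of "exp x" "exp (-x)"] by simp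
  also have "\<dots> \<le> exp (norm x)"
    using norm_exp[of x] norm_exp[of "-x"] by simp
  finally show ?thesis .
qed

lemma summable_exp_quadratic_decay:
  fixes a b :: real
  assumes "a > 0"
  shows "summable (\<lambda>n. exp (real (2 * n + 1) * b - real (n * (n + 1)) * a))"
proof (rule summable_ratio_test[of "exp (-1)" "nat \<lceil>(b + 1) / a\<rceil>"])
  fix n assume n: "nat \<lceil>(b + 1) / a\<rceil> \<le> n"
  then have "(b + 1) / a \<le> real n"
    by linarith
  then have "b + 1 \<le> real (n + 1) * a"
    using assms by (simp add: field_simps)
  then have "real (2 * Suc n + 1) * b - real (Suc n * (Suc n + 1)) * a
        \<le> -1 + (real (2 * n + 1) * b - real (n * (n + 1)) * a)"
    by (simp add: algebra_simps)
  then show "norm (exp (real (2 * Suc n + 1) * b - real (Suc n * (Suc n + 1)) * a))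
        \<le> exp (-1) * norm (exp (real (2 * n + 1) * b - real (n * (n + 1)) * a))"
    by (simp flip: exp_add)
qed simp

lemma summable_thf_series:
  assumes "Im tau > 0"
  shows "summable (\<lambda>n. (-1)^n * exp (\<i> * of_nat (n * (n + 1)) * of_real pi * tau)
                      * sinh (of_nat (2 * n + 1) * x))"
proof (rule summable_comparison_test)
  show "summable (\<lambda>n. exp (real (2 * n + 1) * norm x - real (n * (n + 1)) * (pi * Im tau)))"
    using assms by (intro summable_exp_quadratic_decay) simp
  have "norm ((-1)^n * exp (\<i> * of_nat (n * (n + 1)) * of_real pi * tau) * sinh (of_nat (2 * n + 1) * x))
      \<le> exp (real (2 * n + 1) * norm x - real (n * (n + 1)) * (pi * Im tau))" for n
  proof -
    have "norm (exp (\<i> * of_nat (n * (n + 1)) * of_real pi * tau)) = exp (- real (n * (n + 1)) * (pi * Im tau))"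
      by (simp add: algebra_simps)
    moreover have "norm (sinh (of_nat (2 * n + 1) * x)) \<le> exp (real (2 * n + 1) * norm x)"
      using norm_sinh_le_exp_norm[of "of_nat (2 * n + 1) * x"] by (simp only: norm_mult norm_of_nat)
    ultimately show ?thesis
      by (simp add: norm_mult norm_power exp_diff exp_minus field_simps del: of_nat_mult of_nat_add)
  qed
  then show "\<exists>N. \<forall>n\<ge>N. norm ((-1)^n * exp (\<i> * of_nat (n * (n + 1)) * of_real pi * tau)
      * sinh (of_nat (2 * n + 1) * x)) \<le> exp (real (2 * n + 1) * norm x - real (n * (n + 1)) * (pi * Im tau))"
    by blast
qed

lemma thf_minus:
  assumes "Im tau > 0"
  shows "thf tau (- x) = - thf tau x"
  unfolding thf_def using suminf_minus[OF summable_thf_series[OF assms]] by simp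

lemma thf_eq_minus: "Im tau > 0 \<Longrightarrow> a = - b \<Longrightarrow> thf tau a = - thf tau b"
  by (simp add: thf_minus)

definition cross_factor_A :: "complex \<Rightarrow> complex \<Rightarrow> complex \<Rightarrow> complex \<Rightarrow> complex" where
  "cross_factor_A tau g x y =
     thf tau (x - y + g) * thf tau (x + y) / (thf tau (x - y) * thf tau (x + y + g))"

definition cross_factor_D :: "complex \<Rightarrow> complex \<Rightarrow> complex \<Rightarrow> complex \<Rightarrow> complex" where
  "cross_factor_D tau g x y =
     thf tau (x - y + g) * thf tau (x + y + 2 * g) / (thf tau (x - y) * thf tau (x + y + g))"

lemma M0_altdef:
  "M0 tau g th z L mu l0 lam =
     LamAbar tau g th z L mu l0 - LamA tau g th z L mu l0 * (\<Prod>j\<in>{1..L}. cross_factor_A tau g (lam j) l0)"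
  by (simp add: M0_def cross_factor_A_def)

lemma Mi_altdef:
  "Mi tau g th z L mu i l0 lam =
     (thf tau (2 * lam i) * thf tau g * thf tau (th + (of_nat L - 1) * g + lam i - l0))
     / (thf tau (2 * lam i + g) * thf tau (lam i - l0) * thf tau (th + (of_nat L - 1) * g))
     * LamA tau g th z L mu (lam i) * (\<Prod>j\<in>{1..L} - {i}. cross_factor_A tau g (lam j) (lam i))
   + (thf tau g * thf tau (th + (of_nat L - 2) * g - lam i - l0) * thf tau (th - (of_nat L - 1) * g))
     / (thf tau (lam i + l0 + g) * thf tau (th + (of_nat L - 1) * g) * thf tau (th - of_nat L * g))
     * LamD tau g th z L mu (lam i) * (\<Prod>j\<in>{1..L} - {i}. cross_factor_D tau g (lam i) (lam j))"
  by (simp add: Mi_def cross_factor_A_def cross_factor_D_def)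

lemma cross_factor_A_reflect_left:
  assumes "Im tau > 0"
  shows "cross_factor_A tau g (- x - g) y = cross_factor_A tau g x y"
proof -
  have "thf tau (- x - g - y + g) = - thf tau (x + y)" "thf tau (- x - g + y) = - thf tau (x - y + g)"
    "thf tau (- x - g - y) = - thf tau (x + y + g)" "thf tau (- x - g + y + g) = - thf tau (x - y)"
    by (rule thf_eq_minus[OF assms], simp)+
  then show ?thesis
    unfolding cross_factor_A_def by (simp add: mult.commute)
qed

lemma cross_factor_A_reflect_right:
  assumes "Im tau > 0"
  shows "cross_factor_A tau g x (- y - g) = cross_factor_D tau g y x"
proof -
  have "thf tau (x + (- y - g)) = - thf tau (y - x + g)" "thf tau (x + (- y - g) + g) = - thf tau (y - x)"
    by (rule thf_eq_minus[OF assms], simp)+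
  moreover have "x - (- y - g) + g = y + x + 2 * g" "x - (- y - g) = y + x + g"
    by simp_all
  ultimately show ?thesis
    unfolding cross_factor_A_def cross_factor_D_def by (simp only:) (simp add: mult.commute)
qed

lemma cross_factor_D_reflect_left:
  assumes "Im tau > 0"
  shows "cross_factor_D tau g (- x - g) y = cross_factor_A tau g y x"
proof -
  have "thf tau (- x - g - y + g) = - thf tau (y + x)" "thf tau (- x - g - y) = - thf tau (y + x + g)"
    by (rule thf_eq_minus[OF assms], simp)+
  moreover have "- x - g + y + 2 * g = y - x + g" "- x - g + y + g = y - x"
    by simp_all
  ultimately show ?thesis
    unfolding cross_factor_A_def cross_factor_D_def by (simp only:) (simp add: mult.commute)
qed

lemma cross_factor_D_reflect_right:
  "cross_factor_D tau g x (- y - g) = cross_factor_D tau g x y"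
  unfolding cross_factor_D_def by (simp add: algebra_simps)

lemma prod_fun_upd_invariant:
  assumes "F (c (lam j)) = F (lam j)"
  shows "(\<Prod>k\<in>S. F ((lam(j := c (lam j))) k)) = (\<Prod>k\<in>S. F (lam k))"
  using assms by (intro prod.cong) auto

lemma M0_permute:
  assumes "\<sigma> permutes {1..L}"
  shows "M0 tau g th z L mu l0 (lam \<circ> \<sigma>) = M0 tau g th z L mu l0 lam"
  unfolding M0_altdef using prod.permute[OF assms, of "\<lambda>j. cross_factor_A tau g (lam j) l0"]
  by (simp add: comp_def)

lemma M0_reflect:
  assumes "Im tau > 0"
  shows "M0 tau g th z L mu l0 (lam(j := - lam j - g)) = M0 tau g th z L mu l0 lam"
proof -
  have "(\<Prod>k\<in>{1..L}. cross_factor_A tau g ((lam(j := - lam j - g)) k) l0)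
      = (\<Prod>k\<in>{1..L}. cross_factor_A tau g (lam k) l0)"
    by (rule prod_fun_upd_invariant[where F = "\<lambda>x. cross_factor_A tau g x l0"])
      (simp add: cross_factor_A_reflect_left[OF assms])
  then show ?thesis
    unfolding M0_altdef by (simp del: fun_upd_apply)
qed

lemma Mi_permute:
  assumes "\<sigma> permutes {1..L} - {i}"
  shows "Mi tau g th z L mu i l0 (lam \<circ> \<sigma>) = Mi tau g th z L mu i l0 lam"
proof -
  have "\<sigma> i = i"
    using assms by (simp add: permutes_not_in)
  then show ?thesis
    unfolding Mi_altdef
    using prod.permute[OF assms, of "\<lambda>j. cross_factor_A tau g (lam j) (lam i)"]
      prod.permute[OF assms, of "\<lambda>j. cross_factor_D tau g (lam i) (lam j)"]
    by (simp add: comp_def)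
qed

lemma Mi_reflect_other:
  assumes "Im tau > 0" and "j \<noteq> i"
  shows "Mi tau g th z L mu i l0 (lam(j := - lam j - g)) = Mi tau g th z L mu i l0 lam"
proof -
  have "(\<Prod>k\<in>{1..L} - {i}. cross_factor_A tau g ((lam(j := - lam j - g)) k) (lam i))
      = (\<Prod>k\<in>{1..L} - {i}. cross_factor_A tau g (lam k) (lam i))"
    by (rule prod_fun_upd_invariant[where F = "\<lambda>x. cross_factor_A tau g x (lam i)"])
      (simp add: cross_factor_A_reflect_left[OF assms(1)])
  moreover have "(\<Prod>k\<in>{1..L} - {i}. cross_factor_D tau g (lam i) ((lam(j := - lam j - g)) k))
      = (\<Prod>k\<in>{1..L} - {i}. cross_factor_D tau g (lam i) (lam k))"
    by (rule prod_fun_upd_invariant[where F = "cross_factor_D tau g (lam i)"])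
      (simp add: cross_factor_D_reflect_right)
  moreover have "(lam(j := - lam j - g)) i = lam i"
    using assms(2) by simp
  ultimately show ?thesis
    unfolding Mi_altdef by (simp only:)
qed

lemma Mi_swap:
  assumes "i \<in> {1..L}" and "j \<in> {1..L}"
  shows "Mi tau g th z L mu i l0 (lam(i := lam j, j := lam i)) = Mi tau g th z L mu j l0 lam"
proof (cases "i = j")
  case False
  let ?swap = "Transposition.transpose i j"
  have reindex: "(\<Prod>k\<in>{1..L} - {i}. F ((lam(i := lam j, j := lam i)) k)) = (\<Prod>k\<in>{1..L} - {j}. F (lam k))"
    for F :: "complex \<Rightarrow> complex"
    by (rule prod.reindex_bij_witness[where i = ?swap and j = ?swap])
      (use assms False in \<open>auto simp: Transposition.transpose_def\<close>)
  have swapped_i: "(lam(i := lam j, j := lam i)) i = lam j"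
    using False by simp
  show ?thesis
    unfolding Mi_altdef swapped_i reindex[of "\<lambda>x. cross_factor_A tau g x (lam j)"]
      reindex[of "cross_factor_D tau g (lam j)"] ..
qed simp

lemma LamA_reflect:
  assumes tau: "Im tau > 0"
    and nz: "thf tau (2 * x) \<noteq> 0" "thf tau (2 * x + g) \<noteq> 0" "thf tau (th + z + x) \<noteq> 0"
      "thf tau (th - of_nat L * g) \<noteq> 0" "thf tau (th - (of_nat L - 1) * g) \<noteq> 0"
  shows "LamA tau g th z L mu (- x - g)
    = thf tau (2 * x + g) * thf tau (th + z + x) * thf tau (th - (of_nat L - 1) * g)
      / (thf tau (2 * x) * thf tau (th + z - x - g) * thf tau (th - of_nat L * g))
      * LamD tau g th z L mu x"
proof -
  have "(\<Prod>j\<in>{1..L}. thf tau (- x - g - mu j + g) * thf tau (- x - g + mu j + g))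
      = (\<Prod>j\<in>{1..L}. thf tau (x - mu j) * thf tau (x + mu j))"
  proof (rule prod.cong)
    fix j
    have "thf tau (- x - g - mu j + g) = - thf tau (x + mu j)"
      "thf tau (- x - g + mu j + g) = - thf tau (x - mu j)"
      by (rule thf_eq_minus[OF tau], simp)+
    then show "thf tau (- x - g - mu j + g) * thf tau (- x - g + mu j + g) = thf tau (x - mu j) * thf tau (x + mu j)"
      by simp
  qed simp
  moreover have "z + (- x - g) = z - x - g" "th + z - (- x - g) = th + z + x + g"
    "th + z + (- x - g) = th + z - x - g"
    by simp_all
  ultimately show ?thesis
    unfolding LamA_def LamD_def using nz by (simp only:) (simp add: field_simps)
qed

lemma LamD_reflect:
  assumes tau: "Im tau > 0"
    and nz: "thf tau (2 * x + g) \<noteq> 0" "thf tau (th + z + x) \<noteq> 0"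
  shows "LamD tau g th z L mu (- x - g)
    = thf tau (2 * x + 2 * g) * thf tau (th + z + x) * thf tau (th - of_nat L * g)
      / (thf tau (2 * x + g) * thf tau (th + z - x - g) * thf tau (th - (of_nat L - 1) * g))
      * LamA tau g th z L mu x"
proof -
  have "(\<Prod>j\<in>{1..L}. thf tau (- x - g - mu j) * thf tau (- x - g + mu j))
      = (\<Prod>j\<in>{1..L}. thf tau (x - mu j + g) * thf tau (x + mu j + g))"
  proof (rule prod.cong)
    fix j
    have "thf tau (- x - g - mu j) = - thf tau (x + mu j + g)"
      "thf tau (- x - g + mu j) = - thf tau (x - mu j + g)"
      by (rule thf_eq_minus[OF tau], simp)+
    then show "thf tau (- x - g - mu j) * thf tau (- x - g + mu j) = thf tau (x - mu j + g) * thf tau (x + mu j + g)"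
      by simp
  qed simp
  moreover have "thf tau (2 * (- x - g)) = - thf tau (2 * x + 2 * g)"
    "thf tau (2 * (- x - g) + g) = - thf tau (2 * x + g)"
    by (rule thf_eq_minus[OF tau], simp)+
  moreover have "z - (- x - g) - g = z + x" "th + z + (- x - g) + g = th + z - x"
    "th + z + (- x - g) = th + z - x - g"
    by simp_all
  ultimately show ?thesis
    unfolding LamA_def LamD_def using nz by (simp only:) (simp add: field_simps)
qed

lemma Mi_reflect_self:
  assumes tau: "Im tau > 0" and reg: "Mi_regular tau g th z L i l0 lam"
    and nz: "thf tau (2 * lam i) \<noteq> 0" "thf tau (th + z - lam i - g) \<noteq> 0"
  shows "Mi tau g th z L mu i l0 (lam(i := - lam i - g))
    = - (thf tau (2 * lam i + 2 * g) * thf tau (th + z + lam i))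
        / (thf tau (2 * lam i) * thf tau (th + z - lam i - g))
      * Mi tau g th z L mu i l0 lam"
proof -
  define x where "x = lam i"
  let ?lam' = "lam(i := - x - g)"
  have prod_A: "(\<Prod>k\<in>{1..L} - {i}. cross_factor_A tau g (?lam' k) (- x - g))
      = (\<Prod>k\<in>{1..L} - {i}. cross_factor_D tau g x (lam k))"
    by (rule prod.cong) (simp_all add: cross_factor_A_reflect_right[OF tau])
  have prod_D: "(\<Prod>k\<in>{1..L} - {i}. cross_factor_D tau g (- x - g) (?lam' k))
      = (\<Prod>k\<in>{1..L} - {i}. cross_factor_A tau g (lam k) x)"
    by (rule prod.cong) (simp_all add: cross_factor_D_reflect_left[OF tau])
  have odd_args: "thf tau (2 * (- x - g)) = - thf tau (2 * x + 2 * g)"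
    "thf tau (2 * (- x - g) + g) = - thf tau (2 * x + g)"
    "thf tau (- x - g - l0) = - thf tau (x + l0 + g)"
    "thf tau (- x - g + l0 + g) = - thf tau (x - l0)"
    by (rule thf_eq_minus[OF tau], simp)+
  have shifted_args: "th + (of_nat L - 1) * g + (- x - g) - l0 = th + (of_nat L - 2) * g - x - l0"
    "th + (of_nat L - 2) * g - (- x - g) - l0 = th + (of_nat L - 1) * g + x - l0"
    by (simp_all add: algebra_simps)
  have nz_reg: "thf tau (2 * x + g) \<noteq> 0" "thf tau (x - l0) \<noteq> 0"
    "thf tau (th + (of_nat L - 1) * g) \<noteq> 0" "thf tau (th + z + x) \<noteq> 0"
    "thf tau (x + l0 + g) \<noteq> 0" "thf tau (th - of_nat L * g) \<noteq> 0"
    "thf tau (th - (of_nat L - 1) * g) \<noteq> 0"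
    using reg unfolding Mi_regular_def x_def by auto
  have "Mi tau g th z L mu i l0 ?lam'
    = - (thf tau (2 * x + 2 * g) * thf tau (th + z + x)) / (thf tau (2 * x) * thf tau (th + z - x - g))
      * Mi tau g th z L mu i l0 lam"
    unfolding Mi_altdef fun_upd_same prod_A prod_D odd_args shifted_args
      LamA_reflect[OF tau nz(1)[folded x_def] nz_reg(1,4,6,7)]
      LamD_reflect[OF tau nz_reg(1,4)]
    using nz nz_reg unfolding x_def[symmetric] by (simp add: field_simps)
  then show ?thesis
    unfolding x_def .
qed

theorem lemma3p4:
  fixes tau g th z l0 :: complex and L :: nat and mu lam :: "nat \<Rightarrow> complex"
  assumes "Im tau > 0" and "L \<ge> 1"
  shows
    "(\<forall>\<sigma>. \<sigma> permutes {1..L} \<longrightarrow>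
        M0_regular tau g th z L l0 lam \<longrightarrow> M0_regular tau g th z L l0 (lam \<circ> \<sigma>) \<longrightarrow>
        M0 tau g th z L mu l0 (lam \<circ> \<sigma>) = M0 tau g th z L mu l0 lam)
   \<and> (\<forall>j\<in>{1..L}.
        M0_regular tau g th z L l0 lam \<longrightarrow> M0_regular tau g th z L l0 (lam(j := - lam j - g)) \<longrightarrow>
        M0 tau g th z L mu l0 (lam(j := - lam j - g)) = M0 tau g th z L mu l0 lam)
   \<and> (\<forall>i\<in>{1..L}. \<forall>\<sigma>. \<sigma> permutes ({1..L} - {i}) \<longrightarrow>
        Mi_regular tau g th z L i l0 lam \<longrightarrow> Mi_regular tau g th z L i l0 (lam \<circ> \<sigma>) \<longrightarrow>
        Mi tau g th z L mu i l0 (lam \<circ> \<sigma>) = Mi tau g th z L mu i l0 lam)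
   \<and> (\<forall>i\<in>{1..L}. \<forall>j\<in>{1..L} - {i}.
        Mi_regular tau g th z L i l0 lam \<longrightarrow> Mi_regular tau g th z L i l0 (lam(j := - lam j - g)) \<longrightarrow>
        Mi tau g th z L mu i l0 (lam(j := - lam j - g)) = Mi tau g th z L mu i l0 lam)
   \<and> (\<forall>i\<in>{1..L}. \<forall>j\<in>{1..L}.
        Mi_regular tau g th z L i l0 (lam(i := lam j, j := lam i)) \<longrightarrow> Mi_regular tau g th z L j l0 lam \<longrightarrow>
        Mi tau g th z L mu i l0 (lam(i := lam j, j := lam i)) = Mi tau g th z L mu j l0 lam)
   \<and> (\<forall>i\<in>{1..L}.
        Mi_regular tau g th z L i l0 lam \<longrightarrow> Mi_regular tau g th z L i l0 (lam(i := - lam i - g)) \<longrightarrow>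
        thf tau (2 * lam i) \<noteq> 0 \<longrightarrow> thf tau (th + z - lam i - g) \<noteq> 0 \<longrightarrow>
        Mi tau g th z L mu i l0 (lam(i := - lam i - g))
          = - (thf tau (2 * lam i + 2 * g) * thf tau (th + z + lam i))
              / (thf tau (2 * lam i) * thf tau (th + z - lam i - g))
            * Mi tau g th z L mu i l0 lam)"
proof (intro conjI ballI allI impI)
  \<comment> \<open>Only the last claim needs the denominators to be nonzero; the others hold as identities
    of the expressions, even where HOL's \<open>x / 0 = 0\<close> applies.\<close>
  show "M0 tau g th z L mu l0 (lam \<circ> \<sigma>) = M0 tau g th z L mu l0 lam" if "\<sigma> permutes {1..L}" for \<sigma>
    using M0_permute[OF that] .
  show "M0 tau g th z L mu l0 (lam(j := - lam j - g)) = M0 tau g th z L mu l0 lam" for j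
    using M0_reflect[OF assms(1)] .
  show "Mi tau g th z L mu i l0 (lam \<circ> \<sigma>) = Mi tau g th z L mu i l0 lam"
    if "\<sigma> permutes {1..L} - {i}" for i \<sigma>
    using Mi_permute[OF that] .
  show "Mi tau g th z L mu i l0 (lam(j := - lam j - g)) = Mi tau g th z L mu i l0 lam"
    if "j \<in> {1..L} - {i}" for i j
    using Mi_reflect_other[OF assms(1)] that by simp
  show "Mi tau g th z L mu i l0 (lam(i := lam j, j := lam i)) = Mi tau g th z L mu j l0 lam"
    if "i \<in> {1..L}" "j \<in> {1..L}" for i j
    using Mi_swap[OF that] .
  show "Mi tau g th z L mu i l0 (lam(i := - lam i - g))
      = - (thf tau (2 * lam i + 2 * g) * thf tau (th + z + lam i))
          / (thf tau (2 * lam i) * thf tau (th + z - lam i - g))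
        * Mi tau g th z L mu i l0 lam"
    if "Mi_regular tau g th z L i l0 lam" "thf tau (2 * lam i) \<noteq> 0"
      "thf tau (th + z - lam i - g) \<noteq> 0" for i
    using Mi_reflect_self[OF assms(1) that] .
qed

end
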